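(* Let $b\ge0$, $M>0$ and $0\le\alpha<1$. Let $p(z)=1+c_1z+c_2z^2+\cdots$ be analytic in $\mathbb{D}$ with $|c_1|=2b$ and $|c_n|\le2M$ for all $n\ge2$. Put \[r_0=r_0(\alpha)=\frac{2(1-\alpha)}{1-\alpha+2b+\sqrt{(1-\alpha+2b)^2+8(1-\alpha)(M-b)}}.\] Then $|p(z)-1|\le1-\alpha$ for $|z|\le r_0$, and $\operatorname{Re}p(z)>\alpha$ for $|z|<r_0$. These results are sharp: the function $p_0(z)=1-2bz-2M\frac{z^2}{1-z}$ satisfies the hypotheses and $p_0(r_0)=\alpha$, so that $|p_0(r_0)-1|=1-\alpha$.
   Context: $\mathbb{D}=\{z\in\mathbb{C}:|z|<1\}$. *)

theory Defs
  imports "HOL-Analysis.Analysis"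
begin

definition r0 :: "real \<Rightarrow> real \<Rightarrow> real \<Rightarrow> real" where
  "r0 b M \<alpha> = 2 * (1 - \<alpha>) /
     (1 - \<alpha> + 2 * b + sqrt ((1 - \<alpha> + 2 * b)\<^sup>2 + 8 * (1 - \<alpha>) * (M - b)))"

definition p0 :: "real \<Rightarrow> real \<Rightarrow> complex \<Rightarrow> complex" where
  "p0 b M z = 1 - 2 * of_real b * z - 2 * of_real M * z\<^sup>2 / (1 - z)"

end

theory Submission
  imports Defs
begin

text \<open>Estimating the coefficients termwise gives
  \<open>|p z - 1| \<le> 2 b |z| + 2 M |z|\<^sup>2 / (1 - |z|)\<close>, a majorant that increases strictly in \<open>|z|\<close>
  and is attained by \<open>1 - p\<^sub>0\<close> on the positive axis, since all coefficients of \<open>p\<^sub>0 - 1\<close> are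
  nonpositive. The radius \<open>r\<^sub>0\<close> is the root in \<open>(0,1)\<close> of \<open>majorant = 1 - \<alpha>\<close>, which after
  clearing the denominator is the quadratic \<open>2(M-b) r\<^sup>2 + (1-\<alpha>+2b) r - (1-\<alpha>) = 0\<close>.\<close>

definition majorant :: "real \<Rightarrow> real \<Rightarrow> real \<Rightarrow> real" where
  "majorant b M t = 2 * b * t + 2 * M * t\<^sup>2 / (1 - t)"

lemma majorant_strict_mono:
  assumes "b \<ge> 0" "M > 0" "0 \<le> s" "s < t" "t < 1"
  shows "majorant b M s < majorant b M t"
proof -
  have "s\<^sup>2 / (1 - s) \<le> s\<^sup>2 / (1 - t)"
    using assms by (intro frac_le) auto
  also have "\<dots> < t\<^sup>2 / (1 - t)"
    using assms by (intro divide_strict_right_mono power_strict_mono) auto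
  finally have "M * (s\<^sup>2 / (1 - s)) < M * (t\<^sup>2 / (1 - t))"
    using assms(2) by (intro mult_strict_left_mono)
  moreover have "b * s \<le> b * t"
    using assms by (simp add: mult_left_mono)
  ultimately show ?thesis
    unfolding majorant_def by simp
qed

lemma majorant_mono:
  assumes "b \<ge> 0" "M > 0" "0 \<le> s" "s \<le> t" "t < 1"
  shows "majorant b M s \<le> majorant b M t"
  using majorant_strict_mono[OF assms(1,2,3) _ assms(5)] assms(4)
  by (cases "s = t") auto

lemma p0_of_real: "p0 b M (of_real t) = of_real (1 - majorant b M t)"
  unfolding p0_def majorant_def by simp

lemma r0_pos_less_1_quadratic:
  fixes b M \<alpha> :: real
  assumes "b \<ge> 0" "M > 0" "\<alpha> < 1"
  defines "r \<equiv> r0 b M \<alpha>"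
  shows "0 < r" "r < 1" "2 * (M - b) * r\<^sup>2 + (1 - \<alpha> + 2 * b) * r = 1 - \<alpha>"
proof -
  define A where "A = 1 - \<alpha> + 2 * b"
  define S where "S = sqrt (A\<^sup>2 + 8 * (1 - \<alpha>) * (M - b))"
  \<comment> \<open>The discriminant exceeds \<open>(1 - \<alpha> - 2b)\<^sup>2\<close>, which gives both \<open>S > 0\<close> and \<open>A + S > 2(1 - \<alpha>)\<close>.\<close>
  have discr: "A\<^sup>2 + 8 * (1 - \<alpha>) * (M - b) = (1 - \<alpha> - 2 * b)\<^sup>2 + 8 * (1 - \<alpha>) * M"
    unfolding A_def by (simp add: power2_eq_square algebra_simps)
  have "(1 - \<alpha> - 2 * b)\<^sup>2 < A\<^sup>2 + 8 * (1 - \<alpha>) * (M - b)"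
    unfolding discr using assms by simp
  then have "\<bar>1 - \<alpha> - 2 * b\<bar> < S"
    unfolding S_def by (metis real_sqrt_abs real_sqrt_less_iff)
  then have A_S: "2 * (1 - \<alpha>) < A + S"
    unfolding A_def by (simp add: abs_less_iff)
  have S_sq: "S\<^sup>2 = A\<^sup>2 + 8 * (1 - \<alpha>) * (M - b)"
    unfolding S_def discr using assms by (simp add: add_nonneg_nonneg)
  have "A + S > 0"
    using A_S assms(3) by simp
  have r_div: "r = 2 * (1 - \<alpha>) / (A + S)"
    unfolding r_def r0_def A_def[symmetric] S_def[symmetric] ..
  show "0 < r" "r < 1"
    unfolding r_div using A_S \<open>A + S > 0\<close> assms(3) by auto
  have r_eq: "r * (A + S) = 2 * (1 - \<alpha>)"
    unfolding r_div using \<open>A + S > 0\<close> by simp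
  have "(A + S)\<^sup>2 * (2 * (M - b) * r\<^sup>2 + A * r - (1 - \<alpha>))
      = 2 * (M - b) * (r * (A + S))\<^sup>2 + A * (r * (A + S)) * (A + S) - (1 - \<alpha>) * (A + S)\<^sup>2"
    by (simp add: algebra_simps power2_eq_square)
  also have "\<dots> = (1 - \<alpha>) * (8 * (M - b) * (1 - \<alpha>) + A\<^sup>2 - S\<^sup>2)"
    unfolding r_eq by (simp add: power2_eq_square algebra_simps)
  also have "\<dots> = 0"
    unfolding S_sq by (simp add: algebra_simps)
  finally show "2 * (M - b) * r\<^sup>2 + (1 - \<alpha> + 2 * b) * r = 1 - \<alpha>"
    using \<open>A + S > 0\<close> unfolding A_def by simp
qed

lemma majorant_r0:
  assumes "b \<ge> 0" "M > 0" "\<alpha> < 1"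
  shows "majorant b M (r0 b M \<alpha>) = 1 - \<alpha>"
proof -
  define r where "r = r0 b M \<alpha>"
  note r = r0_pos_less_1_quadratic[OF assms, folded r_def]
  have "2 * M * r\<^sup>2 = (1 - r) * ((1 - \<alpha>) - 2 * b * r)"
    using r(3) by (simp add: algebra_simps power2_eq_square)
  then have "2 * M * r\<^sup>2 / (1 - r) = (1 - \<alpha>) - 2 * b * r"
    using r(2) by (simp add: field_simps)
  then show ?thesis
    unfolding r_def[symmetric] majorant_def by simp
qed

lemma norm_power_series_tail_le:
  fixes c :: "nat \<Rightarrow> 'a :: {real_normed_field, banach}"
  assumes sums: "(\<lambda>n. c n * z ^ n) sums s" and "norm z < 1"
    and coeff_bound: "\<forall>n\<ge>2. norm (c n) \<le> B"
  shows "norm (s - c 0 - c 1 * z) \<le> B * norm z ^ 2 / (1 - norm z)"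
proof -
  have tail: "(\<lambda>n. c (n + 2) * z ^ (n + 2)) sums (s - (\<Sum>n<2. c n * z ^ n))"
    using sums sums_iff_shift'[of "\<lambda>n. c n * z ^ n" 2 s] by simp
  have geom: "(\<lambda>n. B * norm z ^ 2 * norm z ^ n) sums (B * norm z ^ 2 * (1 / (1 - norm z)))"
    using sums_mult[OF geometric_sums[of "norm z"]] assms(2) by simp
  have "norm (s - (\<Sum>n<2. c n * z ^ n)) \<le> B * norm z ^ 2 * (1 / (1 - norm z))"
  proof (rule norm_sums_le[OF tail geom])
    fix n
    have "norm (c (n + 2) * z ^ (n + 2)) = norm (c (n + 2)) * norm z ^ (n + 2)"
      by (simp add: norm_mult norm_power)
    also have "\<dots> \<le> B * norm z ^ (n + 2)"
      using coeff_bound by (intro mult_right_mono) auto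
    finally show "norm (c (n + 2) * z ^ (n + 2)) \<le> B * norm z ^ 2 * norm z ^ n"
      by (simp add: power_add power2_eq_square mult_ac)
  qed
  then show ?thesis
    by (simp add: numeral_2_eq_2 diff_diff_eq)
qed

lemma norm_sub_1_le_majorant:
  fixes c :: "nat \<Rightarrow> complex"
  assumes "(\<lambda>n. c n * z ^ n) sums s" "norm z < 1" "c 0 = 1" "norm (c 1) = 2 * b"
    and "\<forall>n\<ge>2. norm (c n) \<le> 2 * M"
  shows "norm (s - 1) \<le> majorant b M (norm z)"
proof -
  have "norm (s - 1) \<le> norm (s - c 0 - c 1 * z) + norm (c 1 * z)"
    using norm_triangle_ineq[of "s - c 0 - c 1 * z" "c 1 * z"] assms(3) by simp
  also have "\<dots> \<le> 2 * M * norm z ^ 2 / (1 - norm z) + 2 * b * norm z"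
    using norm_power_series_tail_le[OF assms(1,2,5)] assms(4) by (simp add: norm_mult)
  finally show ?thesis
    unfolding majorant_def by simp
qed

definition p0_coeff :: "real \<Rightarrow> real \<Rightarrow> nat \<Rightarrow> complex" where
  "p0_coeff b M n = (if n = 0 then 1 else if n = 1 then - 2 * of_real b else - 2 * of_real M)"

lemma p0_sums:
  assumes "norm z < 1"
  shows "(\<lambda>n. p0_coeff b M n * z ^ n) sums p0 b M z"
proof -
  have tail: "(\<lambda>n. p0_coeff b M (n + 2) * z ^ (n + 2)) = (\<lambda>n. (- 2 * of_real M * z\<^sup>2) * z ^ n)"
    by (auto simp: p0_coeff_def power_add power2_eq_square mult_ac)
  have "(\<lambda>n. (- 2 * of_real M * z\<^sup>2) * z ^ n) sums ((- 2 * of_real M * z\<^sup>2) * (1 / (1 - z)))"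
    using sums_mult[OF geometric_sums[OF assms], of "- 2 * of_real M * z\<^sup>2"] by simp
  then have "(\<lambda>n. p0_coeff b M n * z ^ n)
      sums ((- 2 * of_real M * z\<^sup>2) * (1 / (1 - z)) + (\<Sum>n<2. p0_coeff b M n * z ^ n))"
    using tail sums_iff_shift[of "\<lambda>n. p0_coeff b M n * z ^ n" 2] by simp
  moreover have "(- 2 * of_real M * z\<^sup>2) * (1 / (1 - z)) + (\<Sum>n<2. p0_coeff b M n * z ^ n) = p0 b M z"
    by (simp add: p0_def p0_coeff_def numeral_2_eq_2)
  ultimately show ?thesis
    by simp
qed

theorem theorem4p1:
  fixes b M \<alpha> :: real and p :: "complex \<Rightarrow> complex" and c :: "nat \<Rightarrow> complex"
  assumes "b \<ge> 0" and "M > 0" and "0 \<le> \<alpha>" and "\<alpha> < 1"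
    and "p holomorphic_on ball 0 1"
    and "c 0 = 1"
    and "\<forall>z\<in>ball 0 1. (\<lambda>n. c n * z ^ n) sums p z"
    and "norm (c 1) = 2 * b"
    and "\<forall>n\<ge>2. norm (c n) \<le> 2 * M"
  shows "(\<forall>z. norm z \<le> r0 b M \<alpha> \<longrightarrow> norm (p z - 1) \<le> 1 - \<alpha>)
    \<and> (\<forall>z. norm z < r0 b M \<alpha> \<longrightarrow> Re (p z) > \<alpha>)
    \<and> (p0 b M holomorphic_on ball 0 1
       \<and> (\<exists>d :: nat \<Rightarrow> complex. d 0 = 1 \<and> norm (d 1) = 2 * b
            \<and> (\<forall>n\<ge>2. norm (d n) \<le> 2 * M)
            \<and> (\<forall>z\<in>ball 0 1. (\<lambda>n. d n * z ^ n) sums p0 b M z))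
       \<and> p0 b M (of_real (r0 b M \<alpha>)) = of_real \<alpha>
       \<and> norm (p0 b M (of_real (r0 b M \<alpha>)) - 1) = 1 - \<alpha>)"
proof -
  define r where "r = r0 b M \<alpha>"
  note r = r0_pos_less_1_quadratic[OF assms(1,2,4), folded r_def]
  have p_bound: "norm (p z - 1) \<le> majorant b M (norm z)" if "norm z < 1" for z
    using norm_sub_1_le_majorant[of c z "p z"] assms(6-9) that by simp
  have disc: "\<forall>z. norm z \<le> r \<longrightarrow> norm (p z - 1) \<le> 1 - \<alpha>"
    using p_bound majorant_mono[OF assms(1,2)] majorant_r0[OF assms(1,2,4)] r
    unfolding r_def by (metis norm_ge_zero order.trans le_less_trans)
  have real_part: "\<forall>z. norm z < r \<longrightarrow> Re (p z) > \<alpha>"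
  proof (intro allI impI)
    fix z :: complex
    assume "norm z < r"
    then have "norm (p z - 1) < 1 - \<alpha>"
      using p_bound[of z] majorant_strict_mono[OF assms(1,2) norm_ge_zero, of z r]
        majorant_r0[OF assms(1,2,4)] r unfolding r_def by simp
    then show "Re (p z) > \<alpha>"
      using abs_Re_le_cmod[of "p z - 1"] by simp
  qed
  have "p0 b M holomorphic_on ball 0 1"
    unfolding p0_def by (intro holomorphic_intros) auto
  moreover have "p0_coeff b M 0 = 1 \<and> norm (p0_coeff b M 1) = 2 * b
      \<and> (\<forall>n\<ge>2. norm (p0_coeff b M n) \<le> 2 * M)"
    using assms(1,2) by (simp add: p0_coeff_def norm_mult)
  moreover have p0_r: "p0 b M (of_real r) = of_real \<alpha>"
    using p0_of_real majorant_r0[OF assms(1,2,4)] unfolding r_def by simp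
  moreover have "norm (p0 b M (of_real r) - 1) = 1 - \<alpha>"
    using assms(4) unfolding p0_r by (simp add: cmod_def)
  ultimately show ?thesis
    using disc real_part p0_sums unfolding r_def by auto
qed

end
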